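(* For integers $n\ge k\ge 0$ let $P(n,k)=k!\,[2(n-k)-1]!!\,\binom{2n-k-1}{2(n-k)}$. Then for all $k,\ell\in\{0,1,2,\dots\}$, \[ \sum_{m=0}^{k}(-1)^{m}\binom{k}{m}\binom{m/2}{\ell}= \begin{cases}0, & k>\ell,\\[2pt] \dfrac{(-1)^{\ell}}{(2\ell)!!}P(\ell,k), & \ell\ge k.\end{cases} \]
   Context: Here $\binom{x}{\ell}=\frac{x(x-1)\cdots(x-\ell+1)}{\ell!}$ for real $x$. Double factorials: $(2j)!!=2^j j!$, with $0!!=1$, and $(2j-1)!!=1\cdot3\cdots(2j-1)$ for $j\ge1$, with $(-1)!!=1$. The binomial coefficient $\binom{2n-k-1}{2(n-k)}$ equals $1$ when $n=k$, including the case $n=k=0$, where it is $\binom{-1}{0}=1$. *)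

theory Defs
  imports Complex_Main
begin

text \<open>Double factorial of an odd number: odd_dfact j = (2j-1)!! = 1*3*...*(2j-1), with odd_dfact 0 = (-1)!! = 1.\<close>
definition odd_dfact :: "nat \<Rightarrow> nat" where
  "odd_dfact j = (\<Prod>i\<in>{1..j}. 2 * i - 1)"

text \<open>Double factorial of an even number: even_dfact j = (2j)!! = 2^j j!.\<close>
definition even_dfact :: "nat \<Rightarrow> nat" where
  "even_dfact j = 2 ^ j * fact j"

text \<open>P(n,k) = k! [2(n-k)-1]!! binom(2n-k-1, 2(n-k)), for n \<ge> k; the binomial uses
  the generalized coefficient with real upper argument, so binom(-1,0) = 1.\<close>
definition P :: "nat \<Rightarrow> nat \<Rightarrow> real" where
  "P n k = fact k * real (odd_dfact (n - k))
           * ((2 * real n - real k - 1) gchoose (2 * (n - k)))"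

end

theory Submission
  imports Defs
begin

(* Write T(k,l) for the alternating sum of f_l(m) = (m/2 gchoose l). Since (m+2)/2 = m/2 + 1,
   Pascal's rule gives f_(l+1)(m+2) = f_(l+1)(m) + f_l(m), and applying the first-difference
   recurrence of the alternating sum twice turns this into T(k+2,l+1) = 2 T(k+1,l+1) + T(k,l).
   The right-hand side, written for l = k + j as a quotient of factorials, satisfies the same
   recurrence, and both sides agree for k = 0, for k = 1 (where the closed form of
   1/2 gchoose l enters) and for l = 0. *)

definition alternating_difference :: "nat \<Rightarrow> (nat \<Rightarrow> 'a::comm_ring_1) \<Rightarrow> 'a" where
  "alternating_difference k f = (\<Sum>m\<le>k. (-1) ^ m * of_nat (k choose m) * f m)"

lemma alternating_difference_0 [simp]: "alternating_difference 0 f = f 0"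
  by (simp add: alternating_difference_def)

lemma alternating_difference_1: "alternating_difference 1 f = f 0 - f 1"
  by (simp add: alternating_difference_def)

lemma alternating_difference_const:
  "alternating_difference k (\<lambda>_. c) = (if k = 0 then c else 0)"
  using choose_alternating_sum[of k, where 'a='a]
  by (simp add: alternating_difference_def sum_distrib_right[symmetric])

lemma alternating_difference_add:
  "alternating_difference k (\<lambda>m. f m + g m) = alternating_difference k f + alternating_difference k g"
  by (simp add: alternating_difference_def sum.distrib[symmetric] algebra_simps)

lemma alternating_difference_Suc:
  "alternating_difference (Suc k) f = alternating_difference k f - alternating_difference k (\<lambda>m. f (Suc m))"
proof -
  define a where "a m = (-1) ^ m * of_nat (k choose m) * f m" for m
  have "alternating_difference (Suc k) f
      = f 0 + (\<Sum>m\<le>k. (-1) ^ Suc m * of_nat (Suc k choose Suc m) * f (Suc m))"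
    unfolding alternating_difference_def by (subst sum.atMost_Suc_shift) simp
  also have "\<dots> = (a 0 + (\<Sum>m\<le>k. a (Suc m))) - alternating_difference k (\<lambda>m. f (Suc m))"
  proof -
    have "(-1) ^ Suc m * of_nat (Suc k choose Suc m) * f (Suc m)
        = a (Suc m) - (-1) ^ m * of_nat (k choose m) * f (Suc m)" for m
      by (simp add: a_def algebra_simps)
    then show ?thesis
      by (simp add: alternating_difference_def a_def sum_subtractf)
  qed
  also have "a 0 + (\<Sum>m\<le>k. a (Suc m)) = (\<Sum>m\<le>Suc k. a m)"
    by (rule sum.atMost_Suc_shift[symmetric])
  also have "\<dots> = alternating_difference k f"
    by (simp add: a_def alternating_difference_def binomial_eq_0)
  finally show ?thesis .
qed

lemma alternating_difference_Suc_Suc: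
  assumes "\<And>m. f (Suc (Suc m)) = f m + g m"
  shows "alternating_difference (Suc (Suc k)) f
       = 2 * alternating_difference (Suc k) f + alternating_difference k g"
  using alternating_difference_add[of k f g]
  by (simp add: alternating_difference_Suc assms)

lemma gbinomial_Suc_mult: "of_nat (Suc k) * (a gchoose Suc k) = (a - of_nat k) * (a gchoose k)"
  by (metis gbinomial_absorption gbinomial_absorb_comp)

lemma gbinomial_one_half_Suc:
  "2 ^ (2*j+1) * fact (Suc j) * fact j * ((1/2 :: real) gchoose Suc j) = (-1) ^ j * fact (2*j)"
proof (induction j)
  case 0
  then show ?case by simp
next
  case (Suc j)
  define c :: real where "c = 2 ^ (2*j+1) * fact (Suc j) * fact j"
  have "2 ^ (2 * Suc j + 1) * fact (Suc (Suc j)) * fact (Suc j) * (1/2 gchoose Suc (Suc j))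
      = 4 * real (Suc j) * c * (real (Suc (Suc j)) * (1/2 gchoose Suc (Suc j)))"
    by (simp add: c_def power_add algebra_simps)
  also have "\<dots> = - 2 * real (Suc j) * real (2*j+1) * (c * (1/2 gchoose Suc j))"
    unfolding gbinomial_Suc_mult by (simp add: algebra_simps)
  also have "\<dots> = (-1) ^ Suc j * fact (2 * Suc j)"
    unfolding c_def Suc.IH by (simp add: algebra_simps)
  finally show ?case .
qed

lemma odd_dfact_mult_even_dfact: "odd_dfact j * even_dfact j = fact (2*j)"
proof (induction j)
  case 0
  then show ?case by (simp add: odd_dfact_def even_dfact_def)
next
  case (Suc j)
  have "odd_dfact (Suc j) * even_dfact (Suc j) = (2*j+2) * (2*j+1) * (odd_dfact j * even_dfact j)"
    by (simp add: odd_dfact_def even_dfact_def prod.nat_ivl_Suc' algebra_simps)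
  also have "\<dots> = fact (2 * Suc j)"
    unfolding Suc.IH by (simp add: algebra_simps)
  finally show ?case .
qed

definition P_signed :: "nat \<Rightarrow> nat \<Rightarrow> real" where
  "P_signed k l = (if k > l then 0 else (-1) ^ l / real (even_dfact l) * P l k)"

(* The truncated subtraction in k + 2*j - 1 is harmless at k = 0 because of the factor k;
   this makes P_signed_fact_rec hold uniformly in k, although P_signed 0 is not of this form. *)
definition P_signed_fact :: "nat \<Rightarrow> nat \<Rightarrow> real" where
  "P_signed_fact k j = (-1) ^ (k+j) * real k * fact (k+2*j-1) / (2 ^ (k+2*j) * fact (k+j) * fact j)"

lemma P_signed_fact_0 [simp]: "P_signed_fact 0 j = 0"
  by (simp add: P_signed_fact_def)

lemma P_signed_fact_rec:
  "P_signed_fact (k+2) j = 2 * P_signed_fact (k+1) (j+1) + P_signed_fact k (j+1)"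
proof -
  define F :: real where "F = fact (k+2*j+1)"
  define G :: real where "G = fact (k+j+1)"
  define B :: real where "B = fact j"
  define q :: real where "q = 2 ^ (k+2*j)"
  define s :: real where "s = (-1) ^ (k+j)"
  have pos: "F > 0" "G > 0" "B > 0" "q > 0" "real j + 1 > 0" "real k + real j + 2 > 0"
    by (simp_all add: F_def G_def B_def q_def)
  have a: "P_signed_fact (k+2) j = s * (real k+2) * F / (4*q * ((real k+real j+2) * G) * B)"
    by (simp add: P_signed_fact_def F_def G_def B_def q_def s_def power_add algebra_simps)
  have b: "P_signed_fact (k+1) (j+1)
      = s * (real k+1) * ((real k+2*real j+2) * F)
        / (8*q * ((real k+real j+2) * G) * ((real j+1) * B))"
    by (simp add: P_signed_fact_def F_def G_def B_def q_def s_def power_add algebra_simps)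
  have d: "P_signed_fact k (j+1) = - s * real k * F / (4*q * G * ((real j+1) * B))"
    by (simp add: P_signed_fact_def F_def G_def B_def q_def s_def power_add algebra_simps)
  show ?thesis
    unfolding a b d using pos by (simp add: divide_simps) (simp add: algebra_simps)
qed

lemma P_signed_eq_fact:
  assumes "0 < k"
  shows "P_signed k (k+j) = P_signed_fact k j"
proof -
  obtain i where k: "k = Suc i"
    using assms gr0_implies_Suc by blast
  have upper: "2 * real (k+j) - real k - 1 = real (i + 2*j)"
    by (simp add: k)
  have binom: "(2 * real (k+j) - real k - 1) gchoose (2*j) = fact (i + 2*j) / (fact (2*j) * fact i)"
    unfolding upper binomial_gbinomial[symmetric] by (simp add: binomial_fact)
  have odd: "real (odd_dfact j) = fact (2*j) / (2 ^ j * fact j)"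
    using arg_cong[OF odd_dfact_mult_even_dfact[of j], of real]
    by (simp add: even_dfact_def field_simps)
  have "P (k+j) k = real k * fact (i + 2*j) / (2 ^ j * fact j)"
    unfolding P_def add_diff_cancel_left' binom odd by (simp add: k field_simps)
  then have "P_signed k (k+j)
      = (-1) ^ (k+j) / (2 ^ (k+j) * fact (k+j)) * (real k * fact (i + 2*j) / (2 ^ j * fact j))"
    by (simp add: P_signed_def even_dfact_def)
  also have "\<dots> = P_signed_fact k j"
  proof -
    have "k + 2*j - 1 = i + 2*j" "(2::real) ^ (k + 2*j) = 2 ^ (k+j) * 2 ^ j"
      by (simp_all add: k flip: power_add)
    then show ?thesis
      unfolding P_signed_fact_def by (simp add: ac_simps)
  qed
  finally show ?thesis .
qed

lemma P_signed_diag: "P_signed l l = (-1) ^ l / 2 ^ l"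
  by (simp add: P_signed_def P_def odd_dfact_def even_dfact_def)

lemma P_signed_0: "P_signed 0 l = (if l = 0 then 1 else 0)"
proof (cases l)
  case 0
  then show ?thesis by (simp add: P_signed_diag)
next
  case (Suc j)
  have upper: "2 * real l - real 0 - 1 = real (2*j+1)"
    by (simp add: Suc)
  have "real (2*j+1) gchoose (2 * (l-0)) = 0"
    unfolding binomial_gbinomial[symmetric] by (simp add: Suc binomial_eq_0)
  then show ?thesis
    unfolding P_signed_def P_def upper by (simp add: Suc)
qed

lemma P_signed_rec: "P_signed (Suc (Suc k)) (Suc l) = 2 * P_signed (Suc k) (Suc l) + P_signed k l"
proof (cases k l rule: linorder_cases)
  case less
  then obtain j where l: "l = Suc (k + j)"
    using less_imp_Suc_add by blast
  have "P_signed (Suc (Suc k)) (Suc l) = P_signed_fact (k+2) j"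
    using P_signed_eq_fact[of "k+2" j] by (simp add: l)
  also have "\<dots> = 2 * P_signed_fact (k+1) (j+1) + P_signed_fact k (j+1)"
    by (rule P_signed_fact_rec)
  also have "P_signed_fact (k+1) (j+1) = P_signed (Suc k) (Suc l)"
    using P_signed_eq_fact[of "k+1" "j+1"] by (simp add: l)
  also have "P_signed_fact k (j+1) = P_signed k l"
    using P_signed_eq_fact[of k "j+1"] by (cases "k = 0") (simp_all add: l P_signed_0)
  finally show ?thesis .
next
  case equal
  have "P_signed (Suc (Suc k)) (Suc k) = 0"
    by (simp add: P_signed_def)
  with equal show ?thesis
    by (simp add: P_signed_diag)
next
  case greater
  then show ?thesis
    by (simp add: P_signed_def)
qed

lemma P_signed_1: "P_signed 1 l = (if l = 0 then 1 else 0) - ((1/2) gchoose l)"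
proof (cases l)
  case 0
  then show ?thesis by (simp add: P_signed_def)
next
  case (Suc j)
  have "P_signed 1 l = P_signed_fact 1 j"
    using P_signed_eq_fact[of 1 j] by (simp add: Suc)
  also have "\<dots> = - ((-1) ^ j * fact (2*j) / (2 ^ (2*j+1) * fact (Suc j) * fact j))"
    by (simp add: P_signed_fact_def)
  also have "\<dots> = - ((1/2) gchoose l)"
    unfolding Suc gbinomial_one_half_Suc[of j, symmetric] by simp
  finally show ?thesis
    by (simp add: Suc)
qed

lemma alternating_difference_half_gbinomial:
  "alternating_difference k (\<lambda>m. (real m / 2) gchoose l) = P_signed k l"
proof (induction k arbitrary: l rule: induct_nat_012)
  case 0
  then show ?case by (simp add: P_signed_0 gbinomial_0_left)
next
  case 1
  have "alternating_difference 1 (\<lambda>m. real m / 2 gchoose l) = P_signed 1 l"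
    unfolding alternating_difference_1 P_signed_1 by (simp add: gbinomial_0_left)
  then show ?case
    by simp
next
  case (ge2 k)
  show ?case
  proof (cases l)
    case 0
    then show ?thesis by (simp add: alternating_difference_const P_signed_def)
  next
    case (Suc l')
    have pascal: "real (Suc (Suc m)) / 2 gchoose Suc l'
        = (real m / 2 gchoose Suc l') + (real m / 2 gchoose l')" for m
      using gbinomial_Suc_Suc[of "real m / 2" l'] by (simp add: add.commute add_divide_distrib)
    have "alternating_difference (Suc (Suc k)) (\<lambda>m. real m / 2 gchoose Suc l')
        = 2 * alternating_difference (Suc k) (\<lambda>m. real m / 2 gchoose Suc l')
          + alternating_difference k (\<lambda>m. real m / 2 gchoose l')"
      using pascal by (rule alternating_difference_Suc_Suc)
    also have "\<dots> = 2 * P_signed (Suc k) (Suc l') + P_signed k l'"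
      by (simp only: ge2.IH)
    also have "\<dots> = P_signed (Suc (Suc k)) (Suc l')"
      by (rule P_signed_rec[symmetric])
    finally show ?thesis
      by (simp only: Suc)
  qed
qed

theorem lemma2p2:
  fixes k l :: nat
  shows "(\<Sum>m=0..k. (-1) ^ m * real (k choose m) * ((real m / 2) gchoose l)) =
         (if k > l then 0 else (-1) ^ l / real (even_dfact l) * P l k)"
  using alternating_difference_half_gbinomial[of k l]
  by (simp add: alternating_difference_def P_signed_def atLeast0AtMost)

end
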